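(* Let $G$ be a finite multigraph (parallel edges allowed, no loops), let $k$ be a positive integer, and let $A$ be a proper subset of $V(G)$ such that between any two distinct vertices of $A$ there are $2k$ pairwise edge-disjoint paths in $G$. Assume that there is no edge of $G$ with both endvertices outside of $A$, and let $s$ be a vertex not in $A$ with $\deg(s) > 3$. Then the lifting graph $L(G,s,\tau_A)$ is either (a) a complete multipartite graph, or (b) the disjoint union of an isolated vertex and a complete bipartite graph whose two partition classes have equal size; in particular, this case can only occur if $\deg(s)$ is odd.
   Context: Lifting two distinct edges $sx, sy$ incident with $s$ means deleting them and adding a new edge $xy$ (possibly parallel to existing edges). $\lambda_G(x,y)$ denotes the maximum number of pairwise edge-disjoint $x$–$y$ paths in $G$. The target function $\tau_A$ is defined on pairs of vertices by $\tau_A(x,y) = 2k$ if $x,y \in A$ and $\tau_A(x,y)=0$ otherwise. A pair of edges incident with $s$ is $\tau_A$-admissible if after lifting them the resulting graph $G'$ satisfies $\lambda_{G'}(x,y) \geq \tau_A(x,y)$ for all distinct $x,y \in V(G)\setminus\{s\}$. The lifting graph $L(G,s,\tau_A)$ is the graph whose vertices are the edges incident with $s$, two of them being adjacent if and only if they form a $\tau_A$-admissible pair. *)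

theory Defs
  imports Main
begin

record ('v, 'e) mgraph =
  verts :: "'v set"
  edges :: "'e set"
  ends  :: "'e \<Rightarrow> 'v \<times> 'v"

definition multigraph :: "('v, 'e) mgraph \<Rightarrow> bool" where
  "multigraph G \<longleftrightarrow> finite (verts G) \<and> finite (edges G) \<and>
     (\<forall>e \<in> edges G. fst (ends G e) \<in> verts G \<and> snd (ends G e) \<in> verts G
                    \<and> fst (ends G e) \<noteq> snd (ends G e))"

definition joins :: "('v, 'e) mgraph \<Rightarrow> 'e \<Rightarrow> 'v \<Rightarrow> 'v \<Rightarrow> bool" where
  "joins G e x y \<longleftrightarrow> e \<in> edges G \<and> (ends G e = (x, y) \<or> ends G e = (y, x))"

definition is_path :: "('v, 'e) mgraph \<Rightarrow> 'v \<Rightarrow> 'v \<Rightarrow> 'v list \<times> 'e list \<Rightarrow> bool" where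
  "is_path G x y p \<longleftrightarrow> (case p of (vs, es) \<Rightarrow>
     length vs = Suc (length es) \<and> set vs \<subseteq> verts G \<and> distinct vs \<and>
     hd vs = x \<and> last vs = y \<and>
     (\<forall>i < length es. joins G (es ! i) (vs ! i) (vs ! Suc i)))"

definition edge_disjoint_paths :: "('v, 'e) mgraph \<Rightarrow> 'v \<Rightarrow> 'v \<Rightarrow> nat \<Rightarrow> bool" where
  "edge_disjoint_paths G x y n \<longleftrightarrow> (\<exists>ps :: ('v list \<times> 'e list) list.
     length ps = n \<and> (\<forall>p \<in> set ps. is_path G x y p) \<and>
     (\<forall>i < n. \<forall>j < n. i \<noteq> j \<longrightarrow> set (snd (ps ! i)) \<inter> set (snd (ps ! j)) = {}))"

definition lam :: "('v, 'e) mgraph \<Rightarrow> 'v \<Rightarrow> 'v \<Rightarrow> nat" where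
  "lam G x y = (GREATEST n. edge_disjoint_paths G x y n)"

definition incident_edges :: "('v, 'e) mgraph \<Rightarrow> 'v \<Rightarrow> 'e set" where
  "incident_edges G s = {e \<in> edges G. fst (ends G e) = s \<or> snd (ends G e) = s}"

definition degree :: "('v, 'e) mgraph \<Rightarrow> 'v \<Rightarrow> nat" where
  "degree G s = card (incident_edges G s)"

definition other_end :: "('v, 'e) mgraph \<Rightarrow> 'v \<Rightarrow> 'e \<Rightarrow> 'v" where
  "other_end G s e = (if fst (ends G e) = s then snd (ends G e) else fst (ends G e))"

text \<open>If x = y the new edge would be a loop,
  which is irrelevant for edge-disjoint paths, so it is simply omitted.\<close>
definition lift :: "('v, 'e) mgraph \<Rightarrow> 'v \<Rightarrow> 'e \<Rightarrow> 'e \<Rightarrow> ('v, 'e) mgraph" where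
  "lift G s e f =
     (let x = other_end G s e; y = other_end G s f in
      if x = y then G\<lparr>edges := edges G - {e, f}\<rparr>
      else G\<lparr>edges := edges G - {f}, ends := (ends G)(e := (x, y))\<rparr>)"

definition tau :: "'v set \<Rightarrow> nat \<Rightarrow> 'v \<Rightarrow> 'v \<Rightarrow> nat" where
  "tau A k x y = (if x \<in> A \<and> y \<in> A then 2 * k else 0)"

definition admissible :: "('v, 'e) mgraph \<Rightarrow> 'v \<Rightarrow> ('v \<Rightarrow> 'v \<Rightarrow> nat) \<Rightarrow> 'e \<Rightarrow> 'e \<Rightarrow> bool" where
  "admissible G s t e f \<longleftrightarrow> e \<in> incident_edges G s \<and> f \<in> incident_edges G s \<and> e \<noteq> f \<and>
     (\<forall>x \<in> verts G - {s}. \<forall>y \<in> verts G - {s}. x \<noteq> y \<longrightarrow> lam (lift G s e f) x y \<ge> t x y)"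

definition complete_multipartite :: "'a set \<Rightarrow> ('a \<Rightarrow> 'a \<Rightarrow> bool) \<Rightarrow> bool" where
  "complete_multipartite V adj \<longleftrightarrow> (\<exists>P. \<Union>P = V \<and> {} \<notin> P \<and>
      (\<forall>X \<in> P. \<forall>Y \<in> P. X \<noteq> Y \<longrightarrow> X \<inter> Y = {}) \<and>
      (\<forall>u \<in> V. \<forall>v \<in> V. adj u v \<longleftrightarrow> (\<forall>X \<in> P. \<not> (u \<in> X \<and> v \<in> X))))"

definition isolated_plus_balanced_bipartite :: "'a set \<Rightarrow> ('a \<Rightarrow> 'a \<Rightarrow> bool) \<Rightarrow> bool" where
  "isolated_plus_balanced_bipartite V adj \<longleftrightarrow> (\<exists>z X Y. z \<in> V \<and>
      V - {z} = X \<union> Y \<and> X \<inter> Y = {} \<and> z \<notin> X \<and> z \<notin> Y \<and> card X = card Y \<and>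
      (\<forall>u \<in> V. \<forall>v \<in> V. adj u v \<longleftrightarrow> (u \<in> X \<and> v \<in> Y \<or> u \<in> Y \<and> v \<in> X)))"

end

theory Submission
  imports Defs
begin

text \<open>By Menger's theorem, the hypothesis \<lambda>(x,y) \<ge> 2k on A says that every set X \<subseteq> V(G) - s
  separating A is left by d(X) \<ge> 2k edges. Lifting sx, sy lowers d(X) by two exactly when
  x, y \<in> X, so the pair is admissible iff no dangerous set (one separating A with
  d(X) \<le> 2k + 1) contains both x and y. If being blocked by a common dangerous set is
  transitive, the lifting graph is complete multipartite. Otherwise there are edges e, f, g at s
  with ef and fg blocked by dangerous sets X and Y but eg not blocked; submodularity,
  posimodularity and a parity argument force X \<inter> Y to contain only the end of f and A \<subseteq> X \<union> Y,
  and uncrossing shows that every edge ending in X - Y is admissible with every edge ending in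
  Y - X while the two sides have the same size.\<close>

section \<open>Edge cuts and connectivity through edge sets\<close>

definition crosses :: "('e \<Rightarrow> 'v \<times> 'v) \<Rightarrow> 'v set \<Rightarrow> 'e \<Rightarrow> bool" where
  "crosses en X e \<longleftrightarrow> (fst (en e) \<in> X) \<noteq> (snd (en e) \<in> X)"

definition cut_edges :: "('v, 'e) mgraph \<Rightarrow> 'v set \<Rightarrow> 'e set" where
  "cut_edges G X = {e \<in> edges G. crosses (ends G) X e}"

definition cut_size :: "('v, 'e) mgraph \<Rightarrow> 'v set \<Rightarrow> nat" where
  "cut_size G X = card (cut_edges G X)"

definition edge_rel :: "('e \<Rightarrow> 'v \<times> 'v) \<Rightarrow> 'e set \<Rightarrow> ('v \<times> 'v) set" where
  "edge_rel en F = {(u, v). \<exists>e\<in>F. en e = (u, v) \<or> en e = (v, u)}"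

abbreviation connected_by :: "('e \<Rightarrow> 'v \<times> 'v) \<Rightarrow> 'e set \<Rightarrow> 'v \<Rightarrow> 'v \<Rightarrow> bool" where
  "connected_by en F a b \<equiv> (a, b) \<in> (edge_rel en F)\<^sup>*"

lemma crosses_Compl [simp]: "crosses en (- X) e \<longleftrightarrow> crosses en X e"
  by (auto simp: crosses_def)

lemma multigraph_ends:
  assumes "multigraph G" "e \<in> edges G"
  shows "fst (ends G e) \<in> verts G" "snd (ends G e) \<in> verts G" "fst (ends G e) \<noteq> snd (ends G e)"
  using assms by (auto simp: multigraph_def)

lemma multigraph_finite:
  assumes "multigraph G"
  shows "finite (verts G)" "finite (edges G)"
  using assms by (auto simp: multigraph_def)

lemma multigraph_delete_edges: "multigraph G \<Longrightarrow> multigraph (G\<lparr>edges := edges G - D\<rparr>)"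
  by (auto simp: multigraph_def)

lemma finite_cut_edges: "multigraph G \<Longrightarrow> finite (cut_edges G X)"
  by (auto simp: cut_edges_def multigraph_def)

lemma cut_edges_Int_verts: "multigraph G \<Longrightarrow> cut_edges G (X \<inter> verts G) = cut_edges G X"
  by (auto simp: cut_edges_def crosses_def multigraph_def)

lemma cut_edges_verts_Diff: "multigraph G \<Longrightarrow> cut_edges G (verts G - X) = cut_edges G X"
  by (auto simp: cut_edges_def crosses_def multigraph_def)

lemma cut_edges_delete_edges: "cut_edges (G\<lparr>edges := edges G - D\<rparr>) X = cut_edges G X - D"
  by (auto simp: cut_edges_def)

lemma cut_size_delete_edges:
  assumes "multigraph G"
  shows "cut_size (G\<lparr>edges := edges G - D\<rparr>) X = cut_size G X - card (cut_edges G X \<inter> D)"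
  unfolding cut_size_def cut_edges_delete_edges
  using finite_cut_edges[OF assms] by (simp add: card_Diff_subset_Int)

lemma edge_rel_mono: "F \<subseteq> F' \<Longrightarrow> edge_rel en F \<subseteq> edge_rel en F'"
  by (auto simp: edge_rel_def)

lemma edge_rel_cong: "(\<And>e. e \<in> F \<Longrightarrow> en e = en' e) \<Longrightarrow> edge_rel en F = edge_rel en' F"
  by (auto simp: edge_rel_def)

lemma connected_by_mono: "F \<subseteq> F' \<Longrightarrow> connected_by en F a b \<Longrightarrow> connected_by en F' a b"
  using rtrancl_mono[OF edge_rel_mono] by blast

lemma connected_by_sym: "connected_by en F a b \<Longrightarrow> connected_by en F b a"
proof -
  have "(edge_rel en F)\<inverse> = edge_rel en F" by (auto simp: edge_rel_def)
  then show "connected_by en F a b \<Longrightarrow> connected_by en F b a"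
    by (metis rtrancl_converseI)
qed

lemma connected_by_edge: "e \<in> F \<Longrightarrow> en e = (u, v) \<or> en e = (v, u) \<Longrightarrow> connected_by en F u v"
  by (rule r_into_rtrancl) (auto simp: edge_rel_def)

lemma connected_by_crosses:
  assumes "connected_by en F a b" "a \<in> X" "b \<notin> X"
  obtains e where "e \<in> F" "crosses en X e"
proof -
  have "b \<in> X" if "\<forall>e\<in>F. \<not> crosses en X e"
    using assms(1)
  proof (induction rule: rtrancl_induct)
    case (step u w)
    then obtain e where "e \<in> F" "en e = (u, w) \<or> en e = (w, u)" by (auto simp: edge_rel_def)
    with that step.IH show ?case by (auto simp: crosses_def)
  qed (fact assms(2))
  with assms(3) that show thesis by blast
qed

text \<open>The vertices reachable from a without c form a set that no edge of F - {c} leaves;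
  it lies inside X, so c leaves it, through its end p.\<close>
lemma connected_by_unique_crossing:
  assumes conn: "connected_by en F a b" and ab: "a \<in> X" "b \<notin> X"
    and unique: "\<And>e. e \<in> F \<Longrightarrow> crosses en X e \<Longrightarrow> e = c"
    and c: "c \<in> F" "en c = (p, q) \<or> en c = (q, p)" and pq: "p \<in> X" "q \<notin> X"
  shows "connected_by en (F - {c}) a p"
proof -
  define R where "R = {v. connected_by en (F - {c}) a v}"
  have closed: "\<not> crosses en R e" if "e \<in> F - {c}" for e
  proof
    assume "crosses en R e"
    moreover obtain u w where uw: "en e = (u, w)" by force
    moreover have "connected_by en (F - {c}) u w" "connected_by en (F - {c}) w u"
      using that uw by (auto intro: connected_by_edge)
    ultimately show False by (auto simp: R_def crosses_def intro: rtrancl_trans)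
  qed
  have "R \<subseteq> X"
  proof
    fix v assume "v \<in> R"
    show "v \<in> X"
    proof (rule ccontr)
      assume "v \<notin> X"
      with \<open>v \<in> R\<close> ab(1) obtain e where "e \<in> F - {c}" "crosses en X e"
        by (auto simp: R_def elim: connected_by_crosses)
      with unique show False by blast
    qed
  qed
  moreover have "a \<in> R" by (simp add: R_def)
  ultimately obtain e where "e \<in> F" "crosses en R e"
    using conn ab(2) by (auto elim: connected_by_crosses)
  with closed have "crosses en R c" by blast
  with \<open>R \<subseteq> X\<close> c(2) pq show ?thesis by (auto simp: R_def crosses_def)
qed

section \<open>Menger's theorem for edge cuts\<close>

lemma is_path_take:
  assumes "is_path G x y (vs, es)" "i < length vs"
  shows "is_path G x (vs ! i) (take (Suc i) vs, take i es)"
proof -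
  have "hd (take (Suc i) vs) = hd vs" using assms(2) by (cases vs) auto
  moreover have "last (take (Suc i) vs) = vs ! i"
    using assms(2) by (simp add: take_Suc_conv_app_nth)
  moreover have "set (take (Suc i) vs) \<subseteq> set vs" by (rule set_take_subset)
  ultimately show ?thesis using assms by (auto simp: is_path_def)
qed

lemma is_path_snoc:
  assumes "is_path G x y (vs, es)" "z \<notin> set vs" "z \<in> verts G" "joins G e y z"
  shows "is_path G x z (vs @ [z], es @ [e])"
proof -
  have len: "length vs = Suc (length es)" using assms(1) by (simp add: is_path_def)
  moreover have ne: "vs \<noteq> []" using len by auto
  ultimately have "vs ! length es = y" using assms(1) by (simp add: is_path_def last_conv_nth)
  then have "joins G ((es @ [e]) ! i) ((vs @ [z]) ! i) ((vs @ [z]) ! Suc i)"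
    if "i < Suc (length es)" for i
    using that assms(1,4) len by (cases "i = length es") (auto simp: is_path_def nth_append)
  with assms len ne show ?thesis by (auto simp: is_path_def)
qed

lemma connected_by_path:
  assumes mg: "multigraph G" and F: "F \<subseteq> edges G" and a: "a \<in> verts G"
    and conn: "connected_by (ends G) F a b"
  obtains vs es where "is_path G a b (vs, es)" "set es \<subseteq> F"
proof -
  from conn have "\<exists>vs es. is_path G a b (vs, es) \<and> set es \<subseteq> F"
  proof (induction rule: rtrancl_induct)
    case base
    have "is_path G a a ([a], [])" using a by (simp add: is_path_def)
    then show ?case by force
  next
    case (step y z)
    then obtain vs es where p: "is_path G a y (vs, es)" and es: "set es \<subseteq> F" by blast
    from step.hyps(2) obtain e where e: "e \<in> F" "ends G e = (y, z) \<or> ends G e = (z, y)"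
      by (auto simp: edge_rel_def)
    with F have "joins G e y z" by (auto simp: joins_def)
    moreover have "z \<in> verts G" using multigraph_ends[OF mg, of e] e F by auto
    show ?case
    proof (cases "z \<in> set vs")
      case True
      then obtain i where "i < length vs" "vs ! i = z" by (auto simp: in_set_conv_nth)
      with is_path_take[OF p] es show ?thesis by (metis order_trans set_take_subset)
    next
      case False
      with is_path_snoc[OF p] es e \<open>z \<in> verts G\<close> \<open>joins G e y z\<close> show ?thesis by fastforce
    qed
  qed
  with that show thesis by blast
qed

lemma ex_step_leaving: "P (f 0) \<Longrightarrow> \<not> P (f n) \<Longrightarrow> \<exists>i<n. P (f i) \<and> \<not> P (f (Suc i))"
  by (induction n) (auto intro: less_SucI)

lemma is_path_crosses:
  assumes "is_path G x y (vs, es)" "x \<in> X" "y \<notin> X"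
  obtains e where "e \<in> set es" "e \<in> cut_edges G X"
proof -
  have len: "length vs = Suc (length es)" using assms(1) by (simp add: is_path_def)
  then have "vs \<noteq> []" by auto
  then have "vs ! 0 \<in> X" "vs ! length es \<notin> X"
    using assms len by (auto simp: is_path_def hd_conv_nth last_conv_nth)
  then obtain i where i: "i < length es" "vs ! i \<in> X" "vs ! Suc i \<notin> X"
    using ex_step_leaving[of "\<lambda>v. v \<in> X" "(!) vs"] by auto
  with assms(1) have "es ! i \<in> cut_edges G X"
    by (auto simp: is_path_def joins_def cut_edges_def crosses_def)
  with i(1) that show thesis by (meson nth_mem)
qed

lemma disjoint_family_representatives:
  assumes disj: "\<And>i j. i < n \<Longrightarrow> j < n \<Longrightarrow> i \<noteq> j \<Longrightarrow> F i \<inter> F j = {}"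
    and meets: "\<And>i. i < n \<Longrightarrow> F i \<inter> C \<noteq> {}"
  obtains c where "inj_on c {..<n}" "\<And>i. i < n \<Longrightarrow> c i \<in> F i \<inter> C"
proof -
  have "\<forall>i. \<exists>e. i < n \<longrightarrow> e \<in> F i \<inter> C" using meets by blast
  from choice[OF this] obtain c where c: "\<And>i. i < n \<Longrightarrow> c i \<in> F i \<inter> C" by blast
  have "inj_on c {..<n}"
  proof (rule inj_onI)
    fix i j assume ij: "i \<in> {..<n}" "j \<in> {..<n}" "c i = c j"
    show "i = j"
    proof (rule ccontr)
      assume "i \<noteq> j"
      with ij disj have "F i \<inter> F j = {}" by simp
      with ij c[of i] c[of j] show False by auto
    qed
  qed
  with c that show thesis by blast
qed

lemma edge_disjoint_paths_le_cut_size: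
  assumes mg: "multigraph G" and paths: "edge_disjoint_paths G x y n" and X: "x \<in> X" "y \<notin> X"
  shows "n \<le> cut_size G X"
proof -
  obtain ps where ps: "length ps = n" "\<forall>p\<in>set ps. is_path G x y p"
    and disj: "\<forall>i<n. \<forall>j<n. i \<noteq> j \<longrightarrow> set (snd (ps ! i)) \<inter> set (snd (ps ! j)) = {}"
    using paths unfolding edge_disjoint_paths_def by blast
  have disj': "set (snd (ps ! i)) \<inter> set (snd (ps ! j)) = {}" if "i < n" "j < n" "i \<noteq> j" for i j
    using disj that by simp
  have meets: "set (snd (ps ! i)) \<inter> cut_edges G X \<noteq> {}" if "i < n" for i
  proof -
    have "is_path G x y (fst (ps ! i), snd (ps ! i))" using ps that by simp
    then obtain e where "e \<in> set (snd (ps ! i))" "e \<in> cut_edges G X"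
      using X by (rule is_path_crosses)
    then show ?thesis by blast
  qed
  obtain c where c: "inj_on c {..<n}" "\<And>i. i < n \<Longrightarrow> c i \<in> set (snd (ps ! i)) \<inter> cut_edges G X"
    using disjoint_family_representatives[where F = "\<lambda>i. set (snd (ps ! i))", OF disj' meets]
    by blast
  then have "card (c ` {..<n}) = n" by (simp add: card_image)
  moreover have "c ` {..<n} \<subseteq> cut_edges G X" using c(2) by blast
  ultimately show ?thesis
    unfolding cut_size_def using card_mono[OF finite_cut_edges[OF mg]] by metis
qed

lemma edge_disjoint_paths_mono:
  assumes "edge_disjoint_paths G x y n" "m \<le> n"
  shows "edge_disjoint_paths G x y m"
proof -
  obtain ps where ps: "length ps = n" "\<forall>p\<in>set ps. is_path G x y p"
    "\<forall>i<n. \<forall>j<n. i \<noteq> j \<longrightarrow> set (snd (ps ! i)) \<inter> set (snd (ps ! j)) = {}"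
    using assms(1) unfolding edge_disjoint_paths_def by blast
  show ?thesis unfolding edge_disjoint_paths_def
  proof (intro exI conjI)
    show "length (take m ps) = m" using ps(1) assms(2) by simp
    show "\<forall>p\<in>set (take m ps). is_path G x y p" using ps(2) by (meson in_set_takeD)
    show "\<forall>i<m. \<forall>j<m. i \<noteq> j \<longrightarrow> set (snd (take m ps ! i)) \<inter> set (snd (take m ps ! j)) = {}"
      using ps(3) assms(2) by simp
  qed
qed

lemma le_lam_iff_edge_disjoint_paths:
  assumes mg: "multigraph G" and "x \<noteq> y"
  shows "n \<le> lam G x y \<longleftrightarrow> edge_disjoint_paths G x y n"
proof -
  have bounded: "m \<le> card (edges G)" if "edge_disjoint_paths G x y m" for m
  proof -
    have "m \<le> cut_size G {x}" using edge_disjoint_paths_le_cut_size[OF mg that] assms(2) by simp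
    also have "\<dots> \<le> card (edges G)"
      unfolding cut_size_def cut_edges_def using multigraph_finite[OF mg] by (intro card_mono) auto
    finally show ?thesis .
  qed
  have "edge_disjoint_paths G x y 0" by (simp add: edge_disjoint_paths_def)
  then have lam: "edge_disjoint_paths G x y (lam G x y)"
    unfolding lam_def using bounded by (rule GreatestI_nat)
  show ?thesis
  proof
    assume "n \<le> lam G x y"
    with lam show "edge_disjoint_paths G x y n" by (rule edge_disjoint_paths_mono)
  next
    assume "edge_disjoint_paths G x y n"
    then show "n \<le> lam G x y" unfolding lam_def using bounded by (rule Greatest_le_nat)
  qed
qed

lemma lam_le_cut_size:
  assumes mg: "multigraph G" and X: "x \<in> X" "y \<notin> X"
  shows "lam G x y \<le> cut_size G X"
proof -
  have "x \<noteq> y" using X by auto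
  then have "edge_disjoint_paths G x y (lam G x y)"
    using le_lam_iff_edge_disjoint_paths[OF mg] by blast
  then show ?thesis by (rule edge_disjoint_paths_le_cut_size[OF mg _ X])
qed

definition disjoint_linkage :: "('v, 'e) mgraph \<Rightarrow> nat \<Rightarrow> 'v \<Rightarrow> 'v \<Rightarrow> (nat \<Rightarrow> 'e set) \<Rightarrow> bool" where
  "disjoint_linkage G n x y F \<longleftrightarrow>
     (\<forall>i<n. F i \<subseteq> edges G \<and> connected_by (ends G) (F i) x y) \<and>
     (\<forall>i<n. \<forall>j<n. i \<noteq> j \<longrightarrow> F i \<inter> F j = {})"

lemma edge_disjoint_paths_if_disjoint_linkage:
  assumes mg: "multigraph G" and x: "x \<in> verts G" and F: "disjoint_linkage G n x y F"
  shows "edge_disjoint_paths G x y n"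
proof -
  have "\<exists>p. is_path G x y p \<and> set (snd p) \<subseteq> F i" if "i < n" for i
  proof -
    from F that have "F i \<subseteq> edges G" "connected_by (ends G) (F i) x y"
      by (auto simp: disjoint_linkage_def)
    then obtain vs es where "is_path G x y (vs, es)" "set es \<subseteq> F i"
      by (rule connected_by_path[OF mg _ x])
    then show ?thesis by auto
  qed
  then obtain P where P: "\<And>i. i < n \<Longrightarrow> is_path G x y (P i) \<and> set (snd (P i)) \<subseteq> F i"
    by metis
  show ?thesis unfolding edge_disjoint_paths_def
  proof (intro exI[of _ "map P [0..<n]"] conjI allI impI)
    fix i j assume "i < n" "j < n" "i \<noteq> j"
    with F have "F i \<inter> F j = {}" by (simp add: disjoint_linkage_def)
    with P[of i] P[of j] \<open>i < n\<close> \<open>j < n\<close>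
    show "set (snd (map P [0..<n] ! i)) \<inter> set (snd (map P [0..<n] ! j)) = {}"
      by auto
  qed (use P in auto)
qed

lemma disjoint_linkage_delete_edges:
  "disjoint_linkage (G\<lparr>edges := edges G - D\<rparr>) n x y F \<Longrightarrow> disjoint_linkage G n x y F"
  by (auto simp: disjoint_linkage_def)

lemma disjoint_linkage_extend:
  assumes "disjoint_linkage (G\<lparr>edges := edges G - D\<rparr>) n x y F"
    and "D \<subseteq> edges G" "connected_by (ends G) D x y"
  shows "disjoint_linkage G (Suc n) x y (F(n := D))"
proof -
  have old: "F i \<subseteq> edges G - D \<and> connected_by (ends G) (F i) x y" if "i < n" for i
    using assms(1) that by (simp add: disjoint_linkage_def)
  have disj: "F i \<inter> F j = {}" if "i < n" "j < n" "i \<noteq> j" for i j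
    using assms(1) that by (simp add: disjoint_linkage_def)
  show ?thesis unfolding disjoint_linkage_def
  proof (intro conjI allI impI)
    fix i assume "i < Suc n"
    then show "(F(n := D)) i \<subseteq> edges G"
      using old[of i] assms(2) by (cases "i = n") auto
  next
    fix i assume "i < Suc n"
    then show "connected_by (ends G) ((F(n := D)) i) x y"
      using old[of i] assms(3) by (cases "i = n") auto
  next
    fix i j assume "i < Suc n" "j < Suc n" "i \<noteq> j"
    then show "(F(n := D)) i \<inter> (F(n := D)) j = {}"
      using old[of i] old[of j] disj[of i j] by (cases "i = n"; cases "j = n") auto
  qed
qed

definition contract_vertex :: "'v set \<Rightarrow> 'v \<Rightarrow> 'v \<Rightarrow> 'v" where
  "contract_vertex S w v = (if v \<in> S then w else v)"

definition contract :: "('v, 'e) mgraph \<Rightarrow> 'v set \<Rightarrow> 'v \<Rightarrow> ('v, 'e) mgraph" where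
  "contract G S w = G\<lparr>verts := (verts G - S) \<union> {w},
     edges := {e \<in> edges G. fst (ends G e) \<notin> S \<or> snd (ends G e) \<notin> S},
     ends := (\<lambda>e. (contract_vertex S w (fst (ends G e)), contract_vertex S w (snd (ends G e))))\<rparr>"

lemma contract_simps:
  "verts (contract G S w) = (verts G - S) \<union> {w}"
  "edges (contract G S w) = {e \<in> edges G. fst (ends G e) \<notin> S \<or> snd (ends G e) \<notin> S}"
  "ends (contract G S w) = (\<lambda>e. (contract_vertex S w (fst (ends G e)), contract_vertex S w (snd (ends G e))))"
  by (simp_all add: contract_def)

lemma multigraph_contract:
  assumes mg: "multigraph G" and "w \<in> S"
  shows "multigraph (contract G S w)"
  using assms multigraph_ends[OF mg] multigraph_finite[OF mg]
  by (auto simp: multigraph_def contract_simps contract_vertex_def)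

lemma contract_shrinks:
  assumes "multigraph G" "S \<subseteq> verts G" "w \<in> S" "u \<in> S" "u \<noteq> w"
  shows "card (verts (contract G S w)) + card (edges (contract G S w)) < card (verts G) + card (edges G)"
proof -
  have "card (verts (contract G S w)) < card (verts G)"
    using assms multigraph_finite[OF assms(1)] by (intro psubset_card_mono) (auto simp: contract_simps)
  moreover have "card (edges (contract G S w)) \<le> card (edges G)"
    using multigraph_finite[OF assms(1)] by (intro card_mono) (auto simp: contract_simps)
  ultimately show ?thesis by linarith
qed

lemma crosses_contract:
  "crosses (ends (contract G S w)) Z e \<longleftrightarrow> crosses (ends G) (contract_vertex S w -` Z) e"
  by (simp add: crosses_def contract_simps)

lemma cut_edges_contract:
  "cut_edges (contract G S w) Z = cut_edges G (contract_vertex S w -` Z)"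
  by (auto simp: cut_edges_def crosses_contract contract_simps crosses_def contract_vertex_def)

lemma contract_vertex_vimage:
  "(\<And>v. v \<in> S \<Longrightarrow> v \<in> T \<longleftrightarrow> w \<in> T) \<Longrightarrow> contract_vertex S w -` T = T"
  by (auto simp: contract_vertex_def split: if_splits)

lemma cut_bound_contract:
  assumes cut: "\<And>X. x \<in> X \<Longrightarrow> y \<notin> X \<Longrightarrow> n \<le> cut_size G X"
    and "contract_vertex S w x = x" "contract_vertex S w y = y" "x \<in> Z" "y \<notin> Z"
  shows "n \<le> cut_size (contract G S w) Z"
proof -
  have "x \<in> contract_vertex S w -` Z" "y \<notin> contract_vertex S w -` Z"
    using assms(2-5) by auto
  then have "n \<le> cut_size G (contract_vertex S w -` Z)" by (rule cut)
  then show ?thesis by (simp add: cut_size_def cut_edges_contract)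
qed

lemma contract_connected_meets_cut:
  assumes "F \<subseteq> edges (contract G S w)" "connected_by (ends (contract G S w)) F x y"
    and "contract_vertex S w -` X = X" "x \<in> X" "y \<notin> X"
  shows "F \<inter> cut_edges G X \<noteq> {}"
proof -
  obtain e where e: "e \<in> F" "crosses (ends (contract G S w)) X e"
    using assms(2,4,5) by (rule connected_by_crosses)
  have "crosses (ends G) X e" using e(2) unfolding crosses_contract assms(3) .
  moreover have "e \<in> edges G" using e(1) assms(1) by (auto simp: contract_simps)
  ultimately show ?thesis using e(1) by (auto simp: cut_edges_def)
qed

text \<open>The edges of F other than c stay outside S, where contraction does not change ends.\<close>
lemma contract_linkage_to_cut_edge:
  assumes S: "w \<in> S" "a \<notin> S"
    and F: "F \<subseteq> edges (contract G S w)" "connected_by (ends (contract G S w)) F a w"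
    and c: "F \<inter> cut_edges G S = {c}" "ends G c = (p, q) \<or> ends G c = (q, p)" "p \<notin> S" "q \<in> S"
  shows "connected_by (ends G) (F - {c}) a p"
proof -
  let ?H = "contract G S w"
  have vimage: "contract_vertex S w -` S = S"
    using S(1) by (intro contract_vertex_vimage) auto
  have cross_iff: "crosses (ends ?H) S e \<longleftrightarrow> crosses (ends G) S e" for e
    by (simp add: crosses_contract vimage)
  have unique: "e = c" if "e \<in> F" "crosses (ends ?H) (- S) e" for e
  proof -
    have "e \<in> edges G" using that(1) F(1) by (auto simp: contract_simps)
    moreover have "crosses (ends G) S e" using that(2) cross_iff by simp
    ultimately have "e \<in> F \<inter> cut_edges G S" using that(1) by (simp add: cut_edges_def)
    with c(1) show ?thesis by simp
  qed
  have "c \<in> F" using c(1) by blast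
  moreover have "ends ?H c = (p, w) \<or> ends ?H c = (w, p)"
    using c(2-4) by (auto simp: contract_simps contract_vertex_def)
  ultimately have "connected_by (ends ?H) (F - {c}) a p"
    using S c(3)
    by (intro connected_by_unique_crossing[where X = "- S" and b = w and q = w, OF F(2) _ _ unique])
      auto
  moreover have "edge_rel (ends ?H) (F - {c}) = edge_rel (ends G) (F - {c})"
  proof (rule edge_rel_cong)
    fix e assume e: "e \<in> F - {c}"
    then have "\<not> crosses (ends G) S e" using unique cross_iff by auto
    moreover have "fst (ends G e) \<notin> S \<or> snd (ends G e) \<notin> S"
      using e F(1) by (auto simp: contract_simps)
    ultimately show "ends ?H e = ends G e"
      by (auto simp: crosses_def contract_simps contract_vertex_def)
  qed
  ultimately show ?thesis by simp
qed

lemma disjoint_family_meets_once: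
  assumes C: "finite C" "card C = n"
    and disj: "\<And>i j. i < n \<Longrightarrow> j < n \<Longrightarrow> i \<noteq> j \<Longrightarrow> F i \<inter> F j = {}"
    and meets: "\<And>i. i < n \<Longrightarrow> F i \<inter> C \<noteq> {}"
  obtains c where "bij_betw c {..<n} C" "\<And>i. i < n \<Longrightarrow> F i \<inter> C = {c i}"
proof -
  obtain c where inj: "inj_on c {..<n}" and c: "\<And>i. i < n \<Longrightarrow> c i \<in> F i \<inter> C"
    using disjoint_family_representatives[where F = F, OF disj meets] by blast
  from inj have "card (c ` {..<n}) = card C" by (simp add: card_image C(2))
  moreover have "c ` {..<n} \<subseteq> C" using c by blast
  ultimately have im: "c ` {..<n} = C" using C(1) by (simp add: card_subset_eq)
  have once: "F i \<inter> C = {c i}" if i: "i < n" for i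
  proof
    show "F i \<inter> C \<subseteq> {c i}"
    proof
      fix e assume e: "e \<in> F i \<inter> C"
      then have "e \<in> c ` {..<n}" using im by simp
      then obtain j where j: "j < n" "e = c j" by auto
      have "i = j"
      proof (rule ccontr)
        assume "i \<noteq> j"
        then have "F i \<inter> F j = {}" using disj i j(1) by blast
        with e j c[of j] show False by blast
      qed
      with j show "e \<in> {c i}" by simp
    qed
    show "{c i} \<subseteq> F i \<inter> C" using c[OF i] by blast
  qed
  show thesis
  proof (rule that)
    show "bij_betw c {..<n} C" using inj im by (simp add: bij_betw_def)
  qed (rule once)
qed

lemma connected_through_cut_edge:
  assumes mg: "multigraph G" and X: "X \<subseteq> verts G" "x \<in> X" "y \<in> verts G" "y \<notin> X"
    and F1: "F1 \<subseteq> edges (contract G (verts G - X) y)"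
      "connected_by (ends (contract G (verts G - X) y)) F1 x y"
    and F2: "F2 \<subseteq> edges (contract G X x)" "connected_by (ends (contract G X x)) F2 x y"
    and c: "F1 \<inter> cut_edges G X = {c}" "F2 \<inter> cut_edges G X = {c}"
  shows "connected_by (ends G) (F1 \<union> F2) x y"
proof -
  have cE: "c \<in> edges G" and cX: "crosses (ends G) X c" using c(1) by (auto simp: cut_edges_def)
  obtain p q where pq: "ends G c = (p, q) \<or> ends G c = (q, p)" "p \<in> X" "q \<notin> X"
  proof (cases "fst (ends G c) \<in> X")
    case True
    with cX show ?thesis by (intro that[of "fst (ends G c)" "snd (ends G c)"]) (auto simp: crosses_def)
  next
    case False
    with cX show ?thesis by (intro that[of "snd (ends G c)" "fst (ends G c)"]) (auto simp: crosses_def)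
  qed
  have q: "q \<in> verts G" using multigraph_ends[OF mg cE] pq(1) by auto
  have "connected_by (ends G) (F1 - {c}) x p"
  proof (rule contract_linkage_to_cut_edge[where p = p and q = q, OF _ _ F1])
    show "F1 \<inter> cut_edges G (verts G - X) = {c}" using c(1) cut_edges_verts_Diff[OF mg] by simp
  qed (use X pq q in auto)
  moreover have "connected_by (ends G) (F2 - {c}) y q"
  proof (rule contract_linkage_to_cut_edge[where p = q and q = p, OF _ _ F2(1) connected_by_sym[OF F2(2)]])
    show "F2 \<inter> cut_edges G X = {c}" by (fact c(2))
  qed (use X pq q in auto)
  moreover have "connected_by (ends G) (F1 \<union> F2) p q"
    using pq(1) c(1) cE by (intro connected_by_edge[of c]) auto
  ultimately show ?thesis
    by (meson connected_by_mono connected_by_sym rtrancl_trans Diff_subset le_supI1 le_supI2)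
qed

lemma disjoint_families_matching:
  assumes C: "finite C" "card C = n"
    and disj1: "\<And>i j. i < n \<Longrightarrow> j < n \<Longrightarrow> i \<noteq> j \<Longrightarrow> F i \<inter> F j = {}"
    and disj2: "\<And>i j. i < n \<Longrightarrow> j < n \<Longrightarrow> i \<noteq> j \<Longrightarrow> F' i \<inter> F' j = {}"
    and meets1: "\<And>i. i < n \<Longrightarrow> F i \<inter> C \<noteq> {}" and meets2: "\<And>i. i < n \<Longrightarrow> F' i \<inter> C \<noteq> {}"
    and common: "\<And>i j. i < n \<Longrightarrow> j < n \<Longrightarrow> F i \<inter> F' j \<subseteq> C"
  obtains \<sigma> c where "\<And>i. i < n \<Longrightarrow> \<sigma> i < n"
    "\<And>i. i < n \<Longrightarrow> F i \<inter> C = {c i}" "\<And>i. i < n \<Longrightarrow> F' (\<sigma> i) \<inter> C = {c i}"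
    "\<And>i j. i < n \<Longrightarrow> j < n \<Longrightarrow> i \<noteq> j \<Longrightarrow> (F i \<union> F' (\<sigma> i)) \<inter> (F j \<union> F' (\<sigma> j)) = {}"
proof -
  obtain c1 where c1: "bij_betw c1 {..<n} C" "\<And>i. i < n \<Longrightarrow> F i \<inter> C = {c1 i}"
    using disjoint_family_meets_once[where F = F, OF C disj1 meets1] by blast
  obtain c2 where c2: "bij_betw c2 {..<n} C" "\<And>i. i < n \<Longrightarrow> F' i \<inter> C = {c2 i}"
    using disjoint_family_meets_once[where F = F', OF C disj2 meets2] by blast
  define \<sigma> where "\<sigma> = inv_into {..<n} c2 \<circ> c1"
  have \<sigma>: "bij_betw \<sigma> {..<n} {..<n}"
    unfolding \<sigma>_def using c1(1) c2(1) by (metis bij_betw_inv_into bij_betw_trans)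
  then have \<sigma>_less: "\<sigma> i < n" if "i < n" for i using that by (auto simp: bij_betw_def)
  have c2_\<sigma>: "c2 (\<sigma> i) = c1 i" if "i < n" for i
    using c1(1) c2(1) that unfolding \<sigma>_def bij_betw_def by (auto intro: f_inv_into_f)
  have cross: "F i \<inter> F' (\<sigma> j) = {}" if "i < n" "j < n" "i \<noteq> j" for i j
  proof -
    have "F i \<inter> F' (\<sigma> j) \<subseteq> (F i \<inter> C) \<inter> (F' (\<sigma> j) \<inter> C)"
      using common[OF that(1) \<sigma>_less[OF that(2)]] by blast
    also have "\<dots> = {c1 i} \<inter> {c1 j}"
      using c1(2)[OF that(1)] c2(2)[OF \<sigma>_less[OF that(2)]] c2_\<sigma>[OF that(2)] by simp
    also have "\<dots> = {}" using c1(1) that by (auto simp: bij_betw_def inj_on_def)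
    finally show ?thesis by blast
  qed
  show thesis
  proof (rule that[of \<sigma> c1])
    fix i j assume ij: "i < n" "j < n" "i \<noteq> j"
    moreover have "\<sigma> i \<noteq> \<sigma> j" using \<sigma> ij by (auto simp: bij_betw_def inj_on_def)
    ultimately show "(F i \<union> F' (\<sigma> i)) \<inter> (F j \<union> F' (\<sigma> j)) = {}"
      using disj1[of i j] disj2[of "\<sigma> i" "\<sigma> j"] cross[of i j] cross[of j i] \<sigma>_less
      by blast
  qed (use \<sigma>_less c1(2) c2(2) c2_\<sigma> in auto)
qed

lemma disjoint_linkage_glue:
  assumes mg: "multigraph G" and X: "X \<subseteq> verts G" "x \<in> X" "y \<in> verts G" "y \<notin> X"
    and n: "cut_size G X = n"
    and F1: "disjoint_linkage (contract G (verts G - X) y) n x y F1"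
    and F2: "disjoint_linkage (contract G X x) n x y F2"
  shows "\<exists>F. disjoint_linkage G n x y F"
proof -
  define G1 where "G1 = contract G (verts G - X) y"
  define G2 where "G2 = contract G X x"
  define C where "C = cut_edges G X"
  have E1: "F1 i \<subseteq> edges G1" "connected_by (ends G1) (F1 i) x y" if "i < n" for i
    using F1 that by (simp_all add: disjoint_linkage_def G1_def)
  have E2: "F2 i \<subseteq> edges G2" "connected_by (ends G2) (F2 i) x y" if "i < n" for i
    using F2 that by (simp_all add: disjoint_linkage_def G2_def)
  have disj1: "F1 i \<inter> F1 j = {}" and disj2: "F2 i \<inter> F2 j = {}" if "i < n" "j < n" "i \<noteq> j" for i j
    using F1 F2 that by (simp_all add: disjoint_linkage_def)
  have "contract_vertex (verts G - X) y -` X = X" "contract_vertex X x -` X = X"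
    using X by (auto simp: contract_vertex_def split: if_splits)
  then have meets1: "F1 i \<inter> C \<noteq> {}" and meets2: "F2 i \<inter> C \<noteq> {}" if "i < n" for i
    using X contract_connected_meets_cut[OF E1[OF that, unfolded G1_def]]
      contract_connected_meets_cut[OF E2[OF that, unfolded G2_def]]
    by (auto simp: C_def G1_def G2_def)
  have C: "finite C" "card C = n" using n finite_cut_edges[OF mg] by (simp_all add: C_def cut_size_def)
  have common: "edges G1 \<inter> edges G2 \<subseteq> C"
  proof
    fix e assume e: "e \<in> edges G1 \<inter> edges G2"
    then have eG: "e \<in> edges G" by (simp add: G1_def contract_simps)
    from e have "\<not> (fst (ends G e) \<in> X \<and> snd (ends G e) \<in> X)"
      "\<not> (fst (ends G e) \<in> verts G - X \<and> snd (ends G e) \<in> verts G - X)"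
      by (simp_all add: G1_def G2_def contract_simps)
    with multigraph_ends[OF mg eG] eG show "e \<in> C"
      by (auto simp: C_def cut_edges_def crosses_def)
  qed
  then have "F1 i \<inter> F2 j \<subseteq> C" if "i < n" "j < n" for i j using E1(1)[OF that(1)] E2(1)[OF that(2)]
    by blast
  then obtain \<sigma> c where \<sigma>: "\<And>i. i < n \<Longrightarrow> \<sigma> i < n"
    and c: "\<And>i. i < n \<Longrightarrow> F1 i \<inter> C = {c i}" "\<And>i. i < n \<Longrightarrow> F2 (\<sigma> i) \<inter> C = {c i}"
    and disj: "\<And>i j. i < n \<Longrightarrow> j < n \<Longrightarrow> i \<noteq> j \<Longrightarrow> (F1 i \<union> F2 (\<sigma> i)) \<inter> (F1 j \<union> F2 (\<sigma> j)) = {}"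
    using disjoint_families_matching[where F = F1 and F' = F2, OF C disj1 disj2 meets1 meets2]
    by blast
  have "disjoint_linkage G n x y (\<lambda>i. F1 i \<union> F2 (\<sigma> i))"
    unfolding disjoint_linkage_def
  proof (intro conjI allI impI)
    fix i assume i: "i < n"
    show "F1 i \<union> F2 (\<sigma> i) \<subseteq> edges G"
      using E1(1)[OF i] E2(1)[OF \<sigma>[OF i]] by (auto simp: G1_def G2_def contract_simps)
    show "connected_by (ends G) (F1 i \<union> F2 (\<sigma> i)) x y"
      using mg X E1[OF i] E2[OF \<sigma>[OF i]] c[OF i]
      by (intro connected_through_cut_edge[where c = "c i"]) (auto simp: G1_def G2_def C_def)
  qed (fact disj)
  then show ?thesis by blast
qed

lemma cut_bound_delete_edges:
  assumes mg: "multigraph G"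
    and cut: "\<And>X. x \<in> X \<Longrightarrow> y \<notin> X \<Longrightarrow> Suc n \<le> cut_size G X"
    and few: "\<And>X. x \<in> X \<Longrightarrow> y \<notin> X \<Longrightarrow> card (cut_edges G X \<inter> D) \<le> 1"
    and Z: "x \<in> Z" "y \<notin> Z"
  shows "n \<le> cut_size (G\<lparr>edges := edges G - D\<rparr>) Z"
  using cut_size_delete_edges[OF mg, of D Z] cut[OF Z] few[OF Z] by linarith

lemma cut_bound_delete_inner_edge:
  assumes mg: "multigraph G" and x: "x \<in> verts G"
    and cut: "\<And>X. x \<in> X \<Longrightarrow> y \<notin> X \<Longrightarrow> n \<le> cut_size G X"
    and no_tight: "\<And>X. X \<subseteq> verts G \<Longrightarrow> x \<in> X \<Longrightarrow> y \<notin> X \<Longrightarrow> cut_size G X = n \<Longrightarrow>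
      X = {x} \<or> verts G - X = {y}"
    and e: "e \<in> edges G" "fst (ends G e) \<notin> {x, y}" "snd (ends G e) \<notin> {x, y}"
    and Z: "x \<in> Z" "y \<notin> Z"
  shows "n \<le> cut_size (G\<lparr>edges := edges G - {e}\<rparr>) Z"
proof (cases "e \<in> cut_edges G Z")
  case False
  then show ?thesis using cut_size_delete_edges[OF mg, of "{e}" Z] cut[OF Z] by simp
next
  case True
  define Z0 where "Z0 = Z \<inter> verts G"
  have same: "cut_edges G Z0 = cut_edges G Z"
    unfolding Z0_def by (rule cut_edges_Int_verts[OF mg])
  have ends: "fst (ends G e) \<in> verts G" "snd (ends G e) \<in> verts G"
    using multigraph_ends[OF mg e(1)] by auto
  have "Z0 \<noteq> {x} \<and> verts G - Z0 \<noteq> {y}"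
  proof (cases "fst (ends G e) \<in> Z")
    case True
    with \<open>e \<in> cut_edges G Z\<close> have "snd (ends G e) \<notin> Z" by (simp add: cut_edges_def crosses_def)
    with True ends e(2,3) show ?thesis by (auto simp: Z0_def)
  next
    case False
    with \<open>e \<in> cut_edges G Z\<close> have "snd (ends G e) \<in> Z" by (simp add: cut_edges_def crosses_def)
    with False ends e(2,3) show ?thesis by (auto simp: Z0_def)
  qed
  moreover have "x \<in> Z0" "y \<notin> Z0" using x Z by (auto simp: Z0_def)
  ultimately have "cut_size G Z0 \<noteq> n" using no_tight[of Z0] by (auto simp: Z0_def)
  moreover have "n \<le> cut_size G Z0" using cut \<open>x \<in> Z0\<close> \<open>y \<notin> Z0\<close> by blast
  ultimately have "n < cut_size G Z" using same by (simp add: cut_size_def)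
  then show ?thesis using cut_size_delete_edges[OF mg, of "{e}" Z] True by simp
qed

lemma short_linkage:
  assumes xy: "x \<noteq> y"
    and conn: "\<And>X. x \<in> X \<Longrightarrow> y \<notin> X \<Longrightarrow> cut_edges G X \<noteq> {}"
    and touch: "\<And>e. e \<in> edges G \<Longrightarrow> fst (ends G e) \<in> {x, y} \<or> snd (ends G e) \<in> {x, y}"
  obtains D where "D \<subseteq> edges G" "connected_by (ends G) D x y"
    "\<And>X. x \<in> X \<Longrightarrow> y \<notin> X \<Longrightarrow> card (cut_edges G X \<inter> D) \<le> 1"
proof (cases "\<exists>e. joins G e x y")
  case True
  then obtain e where e: "joins G e x y" by blast
  show thesis
  proof (rule that[of "{e}"])
    show "{e} \<subseteq> edges G" using e by (simp add: joins_def)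
    show "connected_by (ends G) {e} x y" using e by (intro connected_by_edge) (auto simp: joins_def)
  next
    fix X
    show "card (cut_edges G X \<inter> {e}) \<le> 1"
      using card_mono[of "{e}" "cut_edges G X \<inter> {e}"] by simp
  qed
next
  case no_edge: False
  show thesis
  proof (cases "\<exists>v e1 e2. joins G e1 x v \<and> joins G e2 v y")
    case True
    then obtain v e1 e2 where e: "joins G e1 x v" "joins G e2 v y" by blast
    show thesis
    proof (rule that[of "{e1, e2}"])
      show "{e1, e2} \<subseteq> edges G" using e by (simp add: joins_def)
      have "connected_by (ends G) {e1, e2} x v" "connected_by (ends G) {e1, e2} v y"
        using e by (auto simp: joins_def intro: connected_by_edge)
      then show "connected_by (ends G) {e1, e2} x y" by (rule rtrancl_trans)
    next
      fix X assume "x \<in> X" "y \<notin> X"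
      then have "cut_edges G X \<inter> {e1, e2} \<subseteq> (if v \<in> X then {e2} else {e1})"
        using e by (auto simp: joins_def cut_edges_def crosses_def)
      from card_mono[OF _ this] show "card (cut_edges G X \<inter> {e1, e2}) \<le> 1"
        by (cases "v \<in> X") simp_all
    qed
  next
    case no_path: False
    define N where "N = {x} \<union> {v. \<exists>e. joins G e x v}"
    have "x \<in> N" "y \<notin> N" using no_edge xy by (auto simp: N_def)
    then obtain e where "e \<in> cut_edges G N" using conn by blast
    then have e: "e \<in> edges G" "crosses (ends G) N e" by (auto simp: cut_edges_def)
    obtain a b where ab: "ends G e = (a, b)" by force
    have "joins G e a b" "joins G e b a" using e(1) ab by (auto simp: joins_def)
    then have "a \<noteq> x" "b \<noteq> x" using e(2) ab by (auto simp: N_def crosses_def)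
    with touch[OF e(1)] ab have "a = y \<or> b = y" by auto
    then have "\<exists>u. u \<in> N - {x} \<and> joins G e u y"
      using e(2) ab \<open>y \<notin> N\<close> \<open>joins G e a b\<close> \<open>joins G e b a\<close> \<open>a \<noteq> x\<close> \<open>b \<noteq> x\<close>
      by (auto simp: crosses_def)
    with no_path show thesis by (auto simp: N_def)
  qed
qed

text \<open>Induction on the size of the graph: a tight cut with at least two vertices on each side
  is contracted from either side and the two linkages are glued at the cut; otherwise an edge
  avoiding x and y can be deleted, and if there is none, a direct x-y connection of length at
  most two is split off.\<close>
lemma disjoint_linkage_if_cut_bound:
  assumes "multigraph G" "x \<in> verts G" "y \<in> verts G" "x \<noteq> y"
    and "\<And>X. x \<in> X \<Longrightarrow> y \<notin> X \<Longrightarrow> n \<le> cut_size G X"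
  shows "\<exists>F. disjoint_linkage G n x y F"
  using assms
proof (induction "card (verts G) + card (edges G)" arbitrary: G n rule: less_induct)
  case less
  note mg = less.prems(1) and xy = less.prems(2-4) and cut = less.prems(5)
  have fin: "finite (edges G)" using multigraph_finite[OF mg] by auto
  show ?case
  proof (cases "\<exists>X \<subseteq> verts G. x \<in> X \<and> y \<notin> X \<and> cut_size G X = n \<and> X \<noteq> {x} \<and> verts G - X \<noteq> {y}")
    case True
    then obtain X where X: "X \<subseteq> verts G" "x \<in> X" "y \<notin> X" "cut_size G X = n"
      and big: "X \<noteq> {x}" "verts G - X \<noteq> {y}" by blast
    let ?G1 = "contract G (verts G - X) y" and ?G2 = "contract G X x"
    have "\<exists>F. disjoint_linkage ?G1 n x y F"
    proof (rule less.hyps)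
      obtain u where "u \<in> verts G - X" "u \<noteq> y" using big(2) xy(2) X(3) by blast
      then show "card (verts ?G1) + card (edges ?G1) < card (verts G) + card (edges G)"
        using xy(2) X(3) by (intro contract_shrinks[OF mg]) auto
      show "n \<le> cut_size ?G1 Z" if "x \<in> Z" "y \<notin> Z" for Z
        using X that by (intro cut_bound_contract[OF cut]) (auto simp: contract_vertex_def)
    qed (use mg X xy in \<open>auto simp: contract_simps intro: multigraph_contract\<close>)
    moreover have "\<exists>F. disjoint_linkage ?G2 n x y F"
    proof (rule less.hyps)
      obtain u where "u \<in> X" "u \<noteq> x" using big(1) X(2) by blast
      then show "card (verts ?G2) + card (edges ?G2) < card (verts G) + card (edges G)"
        using X by (intro contract_shrinks[OF mg]) auto
      show "n \<le> cut_size ?G2 Z" if "x \<in> Z" "y \<notin> Z" for Z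
        using X that by (intro cut_bound_contract[OF cut]) (auto simp: contract_vertex_def)
    qed (use mg X xy in \<open>auto simp: contract_simps intro: multigraph_contract\<close>)
    ultimately show ?thesis using disjoint_linkage_glue[OF mg X(1,2) xy(2) X(3,4)] by blast
  next
    case no_tight: False
    show ?thesis
    proof (cases "\<exists>e\<in>edges G. fst (ends G e) \<notin> {x, y} \<and> snd (ends G e) \<notin> {x, y}")
      case True
      then obtain e where e: "e \<in> edges G" "fst (ends G e) \<notin> {x, y}" "snd (ends G e) \<notin> {x, y}"
        by blast
      have "\<exists>F. disjoint_linkage (G\<lparr>edges := edges G - {e}\<rparr>) n x y F"
      proof (rule less.hyps)
        show "card (verts (G\<lparr>edges := edges G - {e}\<rparr>)) + card (edges (G\<lparr>edges := edges G - {e}\<rparr>))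
            < card (verts G) + card (edges G)"
          using card_Diff1_less[OF fin e(1)] by simp
        show "n \<le> cut_size (G\<lparr>edges := edges G - {e}\<rparr>) Z" if "x \<in> Z" "y \<notin> Z" for Z
          using no_tight xy(1) e that by (intro cut_bound_delete_inner_edge[OF mg _ cut]) auto
      qed (use mg xy multigraph_delete_edges in auto)
      then show ?thesis by (auto dest: disjoint_linkage_delete_edges)
    next
      case False
      then have touch: "\<And>e. e \<in> edges G \<Longrightarrow> fst (ends G e) \<in> {x, y} \<or> snd (ends G e) \<in> {x, y}"
        by blast
      show ?thesis
      proof (cases n)
        case 0
        then show ?thesis unfolding disjoint_linkage_def by simp
      next
        case (Suc m)
        have "cut_edges G X \<noteq> {}" if "x \<in> X" "y \<notin> X" for X
          using cut[OF that] Suc by (auto simp: cut_size_def)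
        then obtain D where D: "D \<subseteq> edges G" "connected_by (ends G) D x y"
          and few: "\<And>X. x \<in> X \<Longrightarrow> y \<notin> X \<Longrightarrow> card (cut_edges G X \<inter> D) \<le> 1"
          using short_linkage[OF xy(3) _ touch] by blast
        have "D \<noteq> {}" using D(2) xy(3) by (auto simp: edge_rel_def)
        have "\<exists>F. disjoint_linkage (G\<lparr>edges := edges G - D\<rparr>) m x y F"
        proof (rule less.hyps)
          show "card (verts (G\<lparr>edges := edges G - D\<rparr>)) + card (edges (G\<lparr>edges := edges G - D\<rparr>))
              < card (verts G) + card (edges G)"
            using D(1) \<open>D \<noteq> {}\<close> fin by simp (intro psubset_card_mono; auto)
          show "m \<le> cut_size (G\<lparr>edges := edges G - D\<rparr>) Z" if "x \<in> Z" "y \<notin> Z" for Z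
            using cut_bound_delete_edges[OF mg _ few that] cut Suc by blast
        qed (use mg xy multigraph_delete_edges in auto)
        then show ?thesis using disjoint_linkage_extend[OF _ D] Suc by blast
      qed
    qed
  qed
qed

theorem le_lam_iff_cut_size:
  assumes mg: "multigraph G" and xy: "x \<in> verts G" "y \<in> verts G" "x \<noteq> y"
  shows "n \<le> lam G x y \<longleftrightarrow> (\<forall>X. x \<in> X \<longrightarrow> y \<notin> X \<longrightarrow> n \<le> cut_size G X)"
proof (intro iffI allI impI)
  fix X assume "n \<le> lam G x y" "x \<in> X" "y \<notin> X"
  then show "n \<le> cut_size G X" using lam_le_cut_size[OF mg] by (meson le_trans)
next
  assume "\<forall>X. x \<in> X \<longrightarrow> y \<notin> X \<longrightarrow> n \<le> cut_size G X"
  then obtain F where "disjoint_linkage G n x y F"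
    using disjoint_linkage_if_cut_bound[OF mg xy] by blast
  then have "edge_disjoint_paths G x y n" by (rule edge_disjoint_paths_if_disjoint_linkage[OF mg xy(1)])
  then show "n \<le> lam G x y" using le_lam_iff_edge_disjoint_paths[OF mg xy(3)] by simp
qed

lemma le_lam_if_cuts_avoiding:
  assumes mg: "multigraph H" and xy: "x \<in> verts H - {s}" "y \<in> verts H - {s}" "x \<noteq> y"
    and cuts: "\<And>Z. Z \<subseteq> verts H - {s} \<Longrightarrow> (x \<in> Z) \<noteq> (y \<in> Z) \<Longrightarrow> n \<le> cut_size H Z"
  shows "n \<le> lam H x y"
proof -
  have "n \<le> cut_size H Z" if "x \<in> Z" "y \<notin> Z" for Z
  proof (cases "s \<in> Z")
    case False
    then have "n \<le> cut_size H (Z \<inter> verts H)" using xy that by (intro cuts) auto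
    then show ?thesis by (simp add: cut_size_def cut_edges_Int_verts[OF mg])
  next
    case True
    then have "n \<le> cut_size H (verts H - Z)" using xy that by (intro cuts) auto
    then show ?thesis by (simp add: cut_size_def cut_edges_verts_Diff[OF mg])
  qed
  then show ?thesis using le_lam_iff_cut_size[OF mg] xy by blast
qed

section \<open>The cut function around a vertex\<close>

lemma cut_size_eq_sum:
  "finite (edges G) \<Longrightarrow> cut_size G X = (\<Sum>e\<in>edges G. of_bool (crosses (ends G) X e))"
  by (simp add: cut_size_def cut_edges_def Int_def)

lemma cut_size_submodular:
  assumes "finite (edges G)"
  shows "cut_size G (X \<inter> Y) + cut_size G (X \<union> Y) \<le> cut_size G X + cut_size G Y"
proof -
  have "(\<Sum>e\<in>edges G. of_bool (crosses (ends G) (X \<inter> Y) e) + of_bool (crosses (ends G) (X \<union> Y) e))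
      \<le> (\<Sum>e\<in>edges G. of_bool (crosses (ends G) X e) + of_bool (crosses (ends G) Y e) :: nat)"
    by (intro sum_mono) (auto simp: crosses_def)
  then show ?thesis by (simp add: cut_size_eq_sum[OF assms] sum.distrib)
qed

lemma even_cut_size_disjoint:
  assumes "finite (edges G)" "X \<inter> Y = {}"
  shows "even (cut_size G X + cut_size G Y + cut_size G (X \<union> Y))"
proof -
  have "even (\<Sum>e\<in>edges G. of_bool (crosses (ends G) X e) + of_bool (crosses (ends G) Y e)
      + of_bool (crosses (ends G) (X \<union> Y) e) :: nat)"
    using assms(2) by (intro dvd_sum) (auto simp: crosses_def)
  then show ?thesis by (simp add: cut_size_eq_sum[OF assms(1)] sum.distrib)
qed

lemma incident_edge_ends:
  assumes "multigraph G" "e \<in> incident_edges G s"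
  shows "e \<in> edges G" "ends G e = (s, other_end G s e) \<or> ends G e = (other_end G s e, s)"
    "other_end G s e \<noteq> s" "other_end G s e \<in> verts G"
  using assms multigraph_ends[OF assms(1), of e]
  by (cases "ends G e"; force simp: incident_edges_def other_end_def)+

lemma card_incident_eq_sum:
  assumes "finite (edges G)"
  shows "card {h \<in> incident_edges G s. P h} = (\<Sum>e\<in>edges G. of_bool (e \<in> incident_edges G s \<and> P e))"
proof -
  have "{h \<in> incident_edges G s. P h} = edges G \<inter> {e. e \<in> incident_edges G s \<and> P e}"
    by (auto simp: incident_edges_def)
  with assms show ?thesis by simp
qed

lemma cut_size_posimodular:
  assumes mg: "multigraph G" and s: "s \<notin> X" "s \<notin> Y"
  shows "cut_size G (X - Y) + cut_size G (Y - X)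
      + 2 * card {h \<in> incident_edges G s. other_end G s h \<in> X \<inter> Y}
    \<le> cut_size G X + cut_size G Y"
proof -
  have "of_bool (crosses (ends G) (X - Y) e) + of_bool (crosses (ends G) (Y - X) e)
        + 2 * of_bool (e \<in> incident_edges G s \<and> other_end G s e \<in> X \<inter> Y)
      \<le> (of_bool (crosses (ends G) X e) + of_bool (crosses (ends G) Y e) :: nat)" for e
  proof (cases "e \<in> incident_edges G s \<and> other_end G s e \<in> X \<inter> Y")
    case True
    then have "ends G e = (s, other_end G s e) \<or> ends G e = (other_end G s e, s)"
      using incident_edge_ends(2)[OF mg] by blast
    moreover have "other_end G s e \<in> X" "other_end G s e \<in> Y" using True by auto
    ultimately show ?thesis using True s by (elim disjE) (simp_all add: crosses_def)
  next
    case False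
    then show ?thesis
      by (cases "fst (ends G e) \<in> X"; cases "fst (ends G e) \<in> Y";
          cases "snd (ends G e) \<in> X"; cases "snd (ends G e) \<in> Y") (simp_all add: crosses_def)
  qed
  then have "(\<Sum>e\<in>edges G. of_bool (crosses (ends G) (X - Y) e) + of_bool (crosses (ends G) (Y - X) e)
        + 2 * of_bool (e \<in> incident_edges G s \<and> other_end G s e \<in> X \<inter> Y))
      \<le> (\<Sum>e\<in>edges G. of_bool (crosses (ends G) X e) + of_bool (crosses (ends G) Y e) :: nat)"
    by (intro sum_mono)
  then show ?thesis
    using multigraph_finite(2)[OF mg]
    by (simp add: cut_size_eq_sum card_incident_eq_sum sum.distrib sum_distrib_left)
qed

lemma cut_size_complement:
  assumes mg: "multigraph G" and s: "s \<notin> X"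
  shows "cut_size G (verts G - {s} - X) + 2 * card {h \<in> incident_edges G s. other_end G s h \<in> X}
    = cut_size G X + degree G s"
proof -
  have "of_bool (crosses (ends G) (verts G - {s} - X) e)
        + 2 * of_bool (e \<in> incident_edges G s \<and> other_end G s e \<in> X)
      = (of_bool (crosses (ends G) X e) + of_bool (e \<in> incident_edges G s) :: nat)"
    if e: "e \<in> edges G" for e
  proof (cases "e \<in> incident_edges G s")
    case True
    note a = incident_edge_ends[OF mg True]
    from a(2) show ?thesis using a(3,4) s True
      by (cases "other_end G s e \<in> X"; elim disjE) (simp_all add: crosses_def)
  next
    case False
    then have "fst (ends G e) \<noteq> s" "snd (ends G e) \<noteq> s" using e by (auto simp: incident_edges_def)
    then show ?thesis using multigraph_ends[OF mg e] False
      by (cases "fst (ends G e) \<in> X"; cases "snd (ends G e) \<in> X") (simp_all add: crosses_def)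
  qed
  then have "(\<Sum>e\<in>edges G. of_bool (crosses (ends G) (verts G - {s} - X) e)
        + 2 * of_bool (e \<in> incident_edges G s \<and> other_end G s e \<in> X))
      = (\<Sum>e\<in>edges G. of_bool (crosses (ends G) X e) + of_bool (e \<in> incident_edges G s) :: nat)"
    by (intro sum.cong) auto
  moreover have "degree G s = (\<Sum>e\<in>edges G. of_bool (e \<in> incident_edges G s))"
    using card_incident_eq_sum[OF multigraph_finite(2)[OF mg], of s "\<lambda>_. True"]
    by (simp add: degree_def)
  ultimately show ?thesis
    using multigraph_finite(2)[OF mg]
    by (simp add: cut_size_eq_sum card_incident_eq_sum sum.distrib sum_distrib_left)
qed

section \<open>Lifting\<close>

lemma lift_eq_other_end:
  "other_end G s e = other_end G s f \<Longrightarrow> lift G s e f = G\<lparr>edges := edges G - {e, f}\<rparr>"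
  by (simp add: lift_def Let_def)

lemma lift_neq_other_end:
  "other_end G s e \<noteq> other_end G s f \<Longrightarrow> lift G s e f =
     G\<lparr>edges := edges G - {f}, ends := (ends G)(e := (other_end G s e, other_end G s f))\<rparr>"
  by (simp add: lift_def Let_def)

lemma verts_lift [simp]: "verts (lift G s e f) = verts G"
  by (cases "other_end G s e = other_end G s f") (simp_all add: lift_eq_other_end lift_neq_other_end)

lemma multigraph_lift:
  assumes mg: "multigraph G" and e: "e \<in> incident_edges G s" and f: "f \<in> incident_edges G s"
  shows "multigraph (lift G s e f)"
proof (cases "other_end G s e = other_end G s f")
  case True
  then show ?thesis using multigraph_delete_edges[OF mg] by (simp add: lift_eq_other_end)
next
  case False
  then show ?thesis
    using mg incident_edge_ends(4)[OF mg e] incident_edge_ends(4)[OF mg f]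
    by (auto simp: lift_neq_other_end multigraph_def)
qed

lemma cut_size_lift:
  assumes mg: "multigraph G" and e: "e \<in> incident_edges G s" and f: "f \<in> incident_edges G s"
    and "e \<noteq> f" and "s \<notin> X"
  shows "cut_size (lift G s e f) X + 2 * of_bool (other_end G s e \<in> X \<and> other_end G s f \<in> X)
    = cut_size G X"
proof -
  define x where "x = other_end G s e"
  define y where "y = other_end G s f"
  define L where "L = lift G s e f"
  have ex: "ends G e = (s, x) \<or> ends G e = (x, s)" "e \<in> edges G"
    using incident_edge_ends[OF mg e] by (auto simp: x_def)
  have fy: "ends G f = (s, y) \<or> ends G f = (y, s)" "f \<in> edges G"
    using incident_edge_ends[OF mg f] by (auto simp: y_def)
  have cross_e: "crosses (ends G) X e \<longleftrightarrow> x \<in> X" and cross_f: "crosses (ends G) X f \<longleftrightarrow> y \<in> X"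
    using ex(1) fy(1) \<open>s \<notin> X\<close> by (auto simp: crosses_def)
  have G_ef: "card (cut_edges G X \<inter> {e, f}) = of_bool (x \<in> X) + of_bool (y \<in> X)"
  proof -
    have "cut_edges G X \<inter> {e, f} = (if x \<in> X then {e} else {}) \<union> (if y \<in> X then {f} else {})"
      using cross_e cross_f ex(2) fy(2) by (auto simp: cut_edges_def)
    then show ?thesis using \<open>e \<noteq> f\<close> by simp
  qed
  have L_ef: "card (cut_edges L X \<inter> {e, f}) = of_bool (x \<noteq> y \<and> (x \<in> X) \<noteq> (y \<in> X))"
  proof (cases "x = y")
    case True
    then show ?thesis by (auto simp: L_def x_def y_def lift_eq_other_end cut_edges_def)
  next
    case False
    then have "cut_edges L X \<inter> {e, f} = (if (x \<in> X) \<noteq> (y \<in> X) then {e} else {})"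
      using ex(2) by (auto simp: L_def x_def y_def lift_neq_other_end cut_edges_def crosses_def)
    then show ?thesis using False by simp
  qed
  have same: "cut_edges L X - {e, f} = cut_edges G X - {e, f}"
    by (cases "x = y")
      (auto simp: L_def x_def y_def lift_eq_other_end lift_neq_other_end cut_edges_def crosses_def)
  have "cut_size G X = card (cut_edges G X \<inter> {e, f}) + card (cut_edges G X - {e, f})"
    unfolding cut_size_def by (rule card_Int_Diff[OF finite_cut_edges[OF mg]])
  moreover have "cut_size L X = card (cut_edges L X \<inter> {e, f}) + card (cut_edges L X - {e, f})"
    unfolding cut_size_def L_def by (rule card_Int_Diff[OF finite_cut_edges[OF multigraph_lift[OF mg e f]]])
  ultimately show ?thesis using G_ef L_ef same
    unfolding L_def x_def[symmetric] y_def[symmetric] by (cases "x = y") auto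
qed

section \<open>The structure of the lifting graph\<close>

lemma complete_multipartite_quotient:
  assumes R: "equiv V R" and adj: "\<And>u v. u \<in> V \<Longrightarrow> v \<in> V \<Longrightarrow> adj u v \<longleftrightarrow> (u, v) \<notin> R"
  shows "complete_multipartite V adj"
  unfolding complete_multipartite_def
proof (intro exI[of _ "V // R"] conjI ballI impI)
  show "\<Union> (V // R) = V" using R by (rule Union_quotient)
  show "{} \<notin> V // R" using R in_quotient_imp_non_empty by blast
next
  fix X Y assume "X \<in> V // R" "Y \<in> V // R" "X \<noteq> Y"
  then show "X \<inter> Y = {}" using quotient_disj[OF R] by blast
next
  fix u v assume uv: "u \<in> V" "v \<in> V"
  have "(\<exists>X \<in> V // R. u \<in> X \<and> v \<in> X) \<longleftrightarrow> (u, v) \<in> R"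
  proof
    assume "\<exists>X \<in> V // R. u \<in> X \<and> v \<in> X"
    then obtain x where "(x, u) \<in> R" "(x, v) \<in> R" by (auto elim!: quotientE)
    then show "(u, v) \<in> R" using R by (meson equivE symD transD)
  next
    assume "(u, v) \<in> R"
    moreover have "(u, u) \<in> R" using R uv(1) by (simp add: equiv_def refl_on_def)
    ultimately show "\<exists>X \<in> V // R. u \<in> X \<and> v \<in> X" using uv(1) by (auto intro: quotientI)
  qed
  then show "adj u v \<longleftrightarrow> (\<forall>X \<in> V // R. \<not> (u \<in> X \<and> v \<in> X))" using adj[OF uv] by blast
qed

text \<open>An abstract version of the setting of the theorem: V stands for V(G) - s, d X for the
  number of edges of G leaving X, I for the edges at s and a h for the end of h other than s.\<close>
locale lifting_cut_structure =
  fixes V A :: "'v set" and k :: nat and d :: "'v set \<Rightarrow> nat" and I :: "'e set" and a :: "'e \<Rightarrow> 'v"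
  assumes finite_I: "finite I"
    and ends_in_A: "\<And>h. h \<in> I \<Longrightarrow> a h \<in> A"
    and A_subset_V: "A \<subseteq> V"
    and separating_cut: "\<And>X. X \<subseteq> V \<Longrightarrow> X \<inter> A \<noteq> {} \<Longrightarrow> \<not> A \<subseteq> X \<Longrightarrow> 2 * k \<le> d X"
    and submodular: "\<And>X Y. X \<subseteq> V \<Longrightarrow> Y \<subseteq> V \<Longrightarrow> d (X \<inter> Y) + d (X \<union> Y) \<le> d X + d Y"
    and posimodular: "\<And>X Y. X \<subseteq> V \<Longrightarrow> Y \<subseteq> V \<Longrightarrow>
      d (X - Y) + d (Y - X) + 2 * card {h \<in> I. a h \<in> X \<inter> Y} \<le> d X + d Y"
    and complement: "\<And>X. X \<subseteq> V \<Longrightarrow> d (V - X) + 2 * card {h \<in> I. a h \<in> X} = d X + card I"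
    and parity: "\<And>X Y. X \<subseteq> V \<Longrightarrow> Y \<subseteq> V \<Longrightarrow> X \<inter> Y = {} \<Longrightarrow> even (d X + d Y + d (X \<union> Y))"
begin

definition separating :: "'v set \<Rightarrow> bool" where
  "separating X \<longleftrightarrow> X \<subseteq> V \<and> X \<inter> A \<noteq> {} \<and> \<not> A \<subseteq> X"

definition dangerous :: "'v set \<Rightarrow> bool" where
  "dangerous X \<longleftrightarrow> separating X \<and> d X \<le> 2 * k + 1"

definition blocked :: "'e \<Rightarrow> 'e \<Rightarrow> bool" where
  "blocked h h' \<longleftrightarrow> (\<exists>X. dangerous X \<and> a h \<in> X \<and> a h' \<in> X)"

lemma separatingI: "X \<subseteq> V \<Longrightarrow> u \<in> X \<Longrightarrow> u \<in> A \<Longrightarrow> v \<in> A \<Longrightarrow> v \<notin> X \<Longrightarrow> separating X"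
  by (auto simp: separating_def)

lemma separating_subset: "separating X \<Longrightarrow> X \<subseteq> V"
  by (simp add: separating_def)

lemma separating_cut_size: "separating X \<Longrightarrow> 2 * k \<le> d X"
  by (simp add: separating_def separating_cut)

lemma blockedI: "dangerous X \<Longrightarrow> a h \<in> X \<Longrightarrow> a h' \<in> X \<Longrightarrow> blocked h h'"
  by (auto simp: blocked_def)

lemma blocked_sym: "blocked h h' \<Longrightarrow> blocked h' h"
  by (auto simp: blocked_def)

lemma dangerous_Un:
  assumes Z: "dangerous Z" and W: "W \<subseteq> V" "d W \<le> 2 * k"
    and sep: "separating (Z \<inter> W)" "separating (Z \<union> W)"
  shows "dangerous (Z \<union> W)"
proof -
  have "d (Z \<inter> W) + d (Z \<union> W) \<le> d Z + d W"
    using submodular separating_subset[OF sep(2)] W(1) by blast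
  moreover have "2 * k \<le> d (Z \<inter> W)" using separating_cut_size[OF sep(1)] .
  ultimately show ?thesis using Z W(2) sep(2) by (simp add: dangerous_def)
qed

lemma dangerous_crossing_cut_sizes:
  assumes X: "dangerous X" and Y: "dangerous Y" and sep: "separating (X - Y)" "separating (Y - X)"
    and f: "f \<in> I" "a f \<in> X \<inter> Y"
  shows "d (X - Y) = 2 * k" "d (Y - X) = 2 * k" "d X = 2 * k + 1" "d Y = 2 * k + 1"
    and "\<And>h. h \<in> I \<Longrightarrow> a h \<in> X \<inter> Y \<Longrightarrow> h = f"
proof -
  have XY: "X \<subseteq> V" "Y \<subseteq> V" using X Y by (simp_all add: dangerous_def separating_def)
  have bounds: "d X \<le> 2 * k + 1" "d Y \<le> 2 * k + 1" "2 * k \<le> d (X - Y)" "2 * k \<le> d (Y - X)"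
    using X Y separating_cut_size[OF sep(1)] separating_cut_size[OF sep(2)]
    by (simp_all add: dangerous_def)
  have fin: "finite {h \<in> I. a h \<in> X \<inter> Y}" using finite_I by simp
  have "1 \<le> card {h \<in> I. a h \<in> X \<inter> Y}"
    using f fin by (metis (mono_tags, lifting) One_nat_def Suc_leI card_gt_0_iff empty_iff mem_Collect_eq)
  then show "d (X - Y) = 2 * k" "d (Y - X) = 2 * k" "d X = 2 * k + 1" "d Y = 2 * k + 1"
    using posimodular[OF XY] bounds by linarith+
  show "h = f" if "h \<in> I" "a h \<in> X \<inter> Y" for h
  proof (rule ccontr)
    assume "h \<noteq> f"
    then have "card {h, f} \<le> card {h \<in> I. a h \<in> X \<inter> Y}"
      using that f fin by (intro card_mono) auto
    then have "2 \<le> card {h \<in> I. a h \<in> X \<inter> Y}" using \<open>h \<noteq> f\<close> by simp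
    then show False using posimodular[OF XY] bounds by linarith
  qed
qed

end

context lifting_cut_structure
begin

context
  fixes X Y :: "'v set" and e f g :: 'e
  assumes dangerous_X: "dangerous X" and dangerous_Y: "dangerous Y"
    and e: "e \<in> I" "a e \<in> X" "a e \<notin> Y"
    and f: "f \<in> I" "a f \<in> X" "a f \<in> Y"
    and g: "g \<in> I" "a g \<in> Y" "a g \<notin> X"
    and not_blocked: "\<not> blocked e g"
begin

lemma X_subset: "X \<subseteq> V" and Y_subset: "Y \<subseteq> V"
  using dangerous_X dangerous_Y by (simp_all add: dangerous_def separating_def)

lemma ends_efg_in_A: "a e \<in> A" "a f \<in> A" "a g \<in> A"
  using e f g ends_in_A by auto

lemma separating_differences: "separating (X - Y)" "separating (Y - X)"
proof -
  show "separating (X - Y)"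
    using X_subset e f ends_efg_in_A by (intro separatingI[of _ "a e" "a f"]) auto
  show "separating (Y - X)"
    using Y_subset g f ends_efg_in_A by (intro separatingI[of _ "a g" "a f"]) auto
qed

lemma crossing_cut_sizes: "d (X - Y) = 2 * k" "d (Y - X) = 2 * k" "d X = 2 * k + 1" "d Y = 2 * k + 1"
  using dangerous_crossing_cut_sizes[OF dangerous_X dangerous_Y separating_differences f(1)] f(2,3)
  by simp_all

lemma common_end: "h \<in> I \<Longrightarrow> a h \<in> X \<Longrightarrow> a h \<in> Y \<Longrightarrow> h = f"
  using dangerous_crossing_cut_sizes(5)[OF dangerous_X dangerous_Y separating_differences f(1)] f(2,3)
  by simp

lemma A_subset_Un: "A \<subseteq> X \<union> Y"
proof
  fix z assume z: "z \<in> A"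
  show "z \<in> X \<union> Y"
  proof (rule ccontr)
    assume "z \<notin> X \<union> Y"
    then have sep_Un: "separating (X \<union> Y)"
      using X_subset Y_subset e z ends_efg_in_A by (intro separatingI[of _ "a e" z]) auto
    have "\<not> dangerous (X \<union> Y)" using not_blocked e g blockedI[of "X \<union> Y" e g] by blast
    then have "2 * k + 1 < d (X \<union> Y)" using sep_Un by (simp add: dangerous_def)
    moreover have "2 * k \<le> d (X \<inter> Y)"
      using X_subset e f ends_efg_in_A by (intro separating_cut_size separatingI[of _ "a f" "a e"]) auto
    moreover have "d (X \<inter> Y) + d (X \<union> Y) \<le> d X + d Y" using submodular X_subset Y_subset by blast
    ultimately have "d (X \<inter> Y) = 2 * k" using crossing_cut_sizes(3,4) by simp
    moreover have "even (d (X - Y) + d (X \<inter> Y) + d ((X - Y) \<union> (X \<inter> Y)))"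
      using X_subset by (intro parity) auto
    moreover have "(X - Y) \<union> (X \<inter> Y) = X" by blast
    ultimately show False using crossing_cut_sizes(1,3) by simp
  qed
qed

lemma I_split: "I = {h \<in> I. a h \<in> X - Y} \<union> {h \<in> I. a h \<in> Y - X} \<union> {f}"
proof -
  show ?thesis using common_end A_subset_Un ends_in_A f(1) by blast
qed

lemma card_sides_and_complement_cuts:
  shows "card {h \<in> I. a h \<in> X - Y} = card {h \<in> I. a h \<in> Y - X}"
    and "card I = 2 * card {h \<in> I. a h \<in> X - Y} + 1"
    and "d (V - X) \<le> 2 * k" "d (V - Y) \<le> 2 * k"
proof -
  let ?P = "{h \<in> I. a h \<in> X - Y}" and ?Q = "{h \<in> I. a h \<in> Y - X}"
  have fin: "finite ?P" "finite ?Q" using finite_I by simp_all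
  have "card I = card (?P \<union> ?Q) + 1"
    using fin f by (subst I_split) simp
  also have "card (?P \<union> ?Q) = card ?P + card ?Q"
    by (rule card_Un_disjoint[OF fin]) blast
  finally have card_I: "card I = card ?P + card ?Q + 1" .
  have "{h \<in> I. a h \<in> X} = insert f ?P" "{h \<in> I. a h \<in> Y} = insert f ?Q"
    using f by (subst (1 2) I_split; auto)+
  then have "card {h \<in> I. a h \<in> X} = card ?P + 1" "card {h \<in> I. a h \<in> Y} = card ?Q + 1"
    using fin f by simp_all
  moreover have "2 * k \<le> d (V - X)" "2 * k \<le> d (V - Y)"
    using A_subset_V e g ends_efg_in_A
    by (auto intro!: separating_cut_size separatingI[of "V - X" "a g" "a e"]
        separatingI[of "V - Y" "a e" "a g"])
  moreover note complement[OF X_subset] complement[OF Y_subset] card_I crossing_cut_sizes(3,4)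
  ultimately show "card ?P = card ?Q" "card I = 2 * card ?P + 1"
    and "d (V - X) \<le> 2 * k" "d (V - Y) \<le> 2 * k"
    by linarith+
qed

text \<open>A dangerous set containing ends on both sides is uncrossed with the complements
  of X and Y when it misses a f, and otherwise overlaps X or Y in two ends.\<close>
lemma cross_pair_not_blocked:
  assumes h: "h \<in> I" "a h \<in> X" "a h \<notin> Y" and h': "h' \<in> I" "a h' \<in> Y" "a h' \<notin> X"
  shows "\<not> blocked h h'"
proof
  assume "blocked h h'"
  then obtain Z where Z: "dangerous Z" "a h \<in> Z" "a h' \<in> Z" by (auto simp: blocked_def)
  have Z_subset: "Z \<subseteq> V" using Z(1) by (simp add: dangerous_def separating_def)
  have ends_hh': "a h \<in> A" "a h' \<in> A" using h h' ends_in_A by auto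
  note ends = ends_efg_in_A ends_hh' A_subset_V Z_subset e f g h h' Z
  consider "a f \<notin> Z" | "a f \<in> Z" "a g \<notin> Z" | "a f \<in> Z" "a e \<notin> Z" | "a e \<in> Z" "a g \<in> Z"
    by blast
  then show False
  proof cases
    case 1
    have "dangerous (Z \<union> (V - X))"
    proof (rule dangerous_Un[OF Z(1)])
      show "separating (Z \<inter> (V - X))" using ends by (intro separatingI[of _ "a h'" "a h"]) auto
      show "separating (Z \<union> (V - X))" using ends 1 by (intro separatingI[of _ "a g" "a f"]) auto
    qed (use card_sides_and_complement_cuts(3) in auto)
    then have "dangerous (Z \<union> (V - X) \<union> (V - Y))"
    proof (rule dangerous_Un)
      show "separating ((Z \<union> (V - X)) \<inter> (V - Y))"
        using ends by (intro separatingI[of _ "a h" "a g"]) auto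
      show "separating (Z \<union> (V - X) \<union> (V - Y))"
        using ends 1 by (intro separatingI[of _ "a e" "a f"]) auto
    qed (use card_sides_and_complement_cuts(4) in auto)
    moreover have "a e \<in> Z \<union> (V - X) \<union> (V - Y)" "a g \<in> Z \<union> (V - X) \<union> (V - Y)" using ends by auto
    ultimately show False using not_blocked blockedI by blast
  next
    case 2
    have "separating (Z - Y)" using ends 2 by (intro separatingI[of _ "a h" "a f"]) auto
    moreover have "separating (Y - Z)"
      using Y_subset ends 2 by (intro separatingI[of _ "a g" "a f"]) auto
    moreover have "a f \<in> Z \<inter> Y" "a h' \<in> Z \<inter> Y" using ends 2 by auto
    ultimately have "h' = f"
      using dangerous_crossing_cut_sizes(5)[OF Z(1) dangerous_Y _ _ f(1)] h'(1) by blast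
    then show False using h' f by simp
  next
    case 3
    have "separating (Z - X)" using ends 3 by (intro separatingI[of _ "a h'" "a f"]) auto
    moreover have "separating (X - Z)"
      using X_subset ends 3 by (intro separatingI[of _ "a e" "a f"]) auto
    moreover have "a f \<in> Z \<inter> X" "a h \<in> Z \<inter> X" using ends 3 by auto
    ultimately have "h = f"
      using dangerous_crossing_cut_sizes(5)[OF Z(1) dangerous_X _ _ f(1)] h(1) by blast
    then show False using h f by simp
  next
    case 4
    then show False using not_blocked blockedI Z(1) by blast
  qed
qed

lemma lifting_graph_bipartite:
  assumes adj: "\<And>u v. u \<in> I \<Longrightarrow> v \<in> I \<Longrightarrow> adj u v \<longleftrightarrow> u \<noteq> v \<and> \<not> blocked u v"
  shows "isolated_plus_balanced_bipartite I adj"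
  unfolding isolated_plus_balanced_bipartite_def
proof (intro exI conjI)
  let ?P = "{h \<in> I. a h \<in> X - Y}" and ?Q = "{h \<in> I. a h \<in> Y - X}"
  show "I - {f} = ?P \<union> ?Q" by (subst (1) I_split) (use f in auto)
  show "card ?P = card ?Q" by (rule card_sides_and_complement_cuts(1))
  show "\<forall>u\<in>I. \<forall>v\<in>I. adj u v \<longleftrightarrow> (u \<in> ?P \<and> v \<in> ?Q \<or> u \<in> ?Q \<and> v \<in> ?P)"
  proof (intro ballI iffI)
    fix u v assume uv: "u \<in> I" "v \<in> I"
    {
      assume "adj u v"
      then have "\<not> blocked u v" using adj[OF uv] by blast
      then show "u \<in> ?P \<and> v \<in> ?Q \<or> u \<in> ?Q \<and> v \<in> ?P"
        using uv A_subset_Un ends_in_A blockedI[OF dangerous_X, of u v] blockedI[OF dangerous_Y, of u v]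
        by blast
    next
      assume "u \<in> ?P \<and> v \<in> ?Q \<or> u \<in> ?Q \<and> v \<in> ?P"
      then show "adj u v" using adj[OF uv] cross_pair_not_blocked blocked_sym by auto
    }
  qed
qed (use f in auto)

end

end

context lifting_cut_structure
begin

theorem lifting_graph_cases:
  assumes adj: "\<And>u v. u \<in> I \<Longrightarrow> v \<in> I \<Longrightarrow> adj u v \<longleftrightarrow> u \<noteq> v \<and> \<not> blocked u v"
  shows "complete_multipartite I adj \<or> (isolated_plus_balanced_bipartite I adj \<and> odd (card I))"
proof (cases "\<forall>e\<in>I. \<forall>f\<in>I. \<forall>g\<in>I. blocked e f \<longrightarrow> blocked f g \<longrightarrow> e \<noteq> g \<longrightarrow> blocked e g")
  case True
  define R where "R = {(u, v). u \<in> I \<and> v \<in> I \<and> (u = v \<or> blocked u v)}"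
  have "equiv I R"
  proof (rule equivI)
    show "R \<subseteq> I \<times> I" "refl_on I R" by (auto simp: R_def refl_on_def)
    show "sym R" by (auto simp: R_def sym_def dest: blocked_sym)
    show "trans R" unfolding R_def trans_def using True by blast
  qed
  then have "complete_multipartite I adj"
    by (rule complete_multipartite_quotient) (auto simp: R_def adj)
  then show ?thesis ..
next
  case False
  then obtain e f g where efg: "e \<in> I" "f \<in> I" "g \<in> I" "blocked e f" "blocked f g" "\<not> blocked e g"
    by blast
  obtain X where X: "dangerous X" "a e \<in> X" "a f \<in> X" using efg(4) by (auto simp: blocked_def)
  obtain Y where Y: "dangerous Y" "a f \<in> Y" "a g \<in> Y" using efg(5) by (auto simp: blocked_def)
  have "a g \<notin> X" "a e \<notin> Y" using X Y efg(6) blockedI by blast+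
  note config = X(1) Y(1) efg(1) X(2) \<open>a e \<notin> Y\<close> efg(2) X(3) Y(2) efg(3) Y(3) \<open>a g \<notin> X\<close> efg(6)
  have "isolated_plus_balanced_bipartite I adj" by (rule lifting_graph_bipartite[OF config adj])
  moreover have "odd (card I)" using card_sides_and_complement_cuts(2)[OF config] by simp
  ultimately show ?thesis by blast
qed

end

locale graph_lifting =
  fixes G :: "('v, 'e) mgraph" and A :: "'v set" and k :: nat and s :: 'v
  assumes multigraph: "multigraph G"
    and A_subset: "A \<subseteq> verts G - {s}"
    and connectivity: "\<And>x y. x \<in> A \<Longrightarrow> y \<in> A \<Longrightarrow> x \<noteq> y \<Longrightarrow> 2 * k \<le> lam G x y"
    and edges_meet_A: "\<And>e. e \<in> edges G \<Longrightarrow> fst (ends G e) \<in> A \<or> snd (ends G e) \<in> A"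

sublocale graph_lifting \<subseteq> lifting_cut_structure "verts G - {s}" A k "cut_size G"
  "incident_edges G s" "other_end G s"
proof unfold_locales
  show "finite (incident_edges G s)"
    using multigraph_finite(2)[OF multigraph] by (simp add: incident_edges_def)
  show "other_end G s h \<in> A" if "h \<in> incident_edges G s" for h
    using that edges_meet_A[of h] A_subset by (auto simp: incident_edges_def other_end_def)
  show "A \<subseteq> verts G - {s}" by (fact A_subset)
  show "2 * k \<le> cut_size G X" if sep: "X \<inter> A \<noteq> {}" "\<not> A \<subseteq> X" for X
  proof -
    obtain p q where "p \<in> X" "p \<in> A" "q \<in> A" "q \<notin> X" using sep by blast
    then show ?thesis using connectivity[of p q] lam_le_cut_size[OF multigraph] by fastforce
  qed
  show "cut_size G (X \<inter> Y) + cut_size G (X \<union> Y) \<le> cut_size G X + cut_size G Y" for X Y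
    using cut_size_submodular multigraph_finite(2)[OF multigraph] by blast
  show "even (cut_size G X + cut_size G Y + cut_size G (X \<union> Y))" if "X \<inter> Y = {}" for X Y
    using even_cut_size_disjoint multigraph_finite(2)[OF multigraph] that by blast
  show "cut_size G (X - Y) + cut_size G (Y - X)
      + 2 * card {h \<in> incident_edges G s. other_end G s h \<in> X \<inter> Y} \<le> cut_size G X + cut_size G Y"
    if "X \<subseteq> verts G - {s}" "Y \<subseteq> verts G - {s}" for X Y
    using that by (intro cut_size_posimodular[OF multigraph]) auto
  show "cut_size G (verts G - {s} - X) + 2 * card {h \<in> incident_edges G s. other_end G s h \<in> X}
      = cut_size G X + card (incident_edges G s)" if "X \<subseteq> verts G - {s}" for X
    using cut_size_complement[OF multigraph, of s X] that by (auto simp: degree_def)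
qed

context graph_lifting
begin

lemma cut_size_lift_ge:
  assumes uv: "u \<in> incident_edges G s" "v \<in> incident_edges G s" "u \<noteq> v" "\<not> blocked u v"
    and Y: "separating Y"
  shows "2 * k \<le> cut_size (lift G s u v) Y"
proof -
  have "s \<notin> Y" using Y by (auto simp: separating_def)
  note lift = cut_size_lift[OF multigraph uv(1-3) this]
  show ?thesis
  proof (cases "other_end G s u \<in> Y \<and> other_end G s v \<in> Y")
    case True
    then have "\<not> dangerous Y" using uv(4) blockedI by blast
    then show ?thesis using lift True Y by (simp add: dangerous_def)
  next
    case False
    then show ?thesis
      using lift separating_cut_size[OF Y] by (cases "other_end G s u \<in> Y") simp_all
  qed
qed

lemma admissible_iff_not_blocked:
  assumes u: "u \<in> incident_edges G s" and v: "v \<in> incident_edges G s"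
  shows "admissible G s (tau A k) u v \<longleftrightarrow> u \<noteq> v \<and> \<not> blocked u v"
proof
  assume adm: "admissible G s (tau A k) u v"
  then have "u \<noteq> v" by (simp add: admissible_def)
  moreover have "\<not> blocked u v"
  proof
    assume "blocked u v"
    then obtain X where X: "dangerous X" "other_end G s u \<in> X" "other_end G s v \<in> X"
      by (auto simp: blocked_def)
    then obtain p q where pq: "p \<in> X" "p \<in> A" "q \<in> A" "q \<notin> X"
      by (auto simp: dangerous_def separating_def)
    have "s \<notin> X" using X(1) by (auto simp: dangerous_def separating_def)
    have "p \<in> verts G - {s}" "q \<in> verts G - {s}" "p \<noteq> q" using pq A_subset by auto
    then have "tau A k p q \<le> lam (lift G s u v) p q"
      using adm unfolding admissible_def by blast
    also have "\<dots> \<le> cut_size (lift G s u v) X"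
      using lam_le_cut_size[OF multigraph_lift[OF multigraph u v]] pq by blast
    finally have "2 * k \<le> cut_size (lift G s u v) X" using pq by (simp add: tau_def)
    moreover have "cut_size (lift G s u v) X + 2 = cut_size G X"
      using cut_size_lift[OF multigraph u v \<open>u \<noteq> v\<close> \<open>s \<notin> X\<close>] X by simp
    ultimately show False using X(1) by (simp add: dangerous_def)
  qed
  ultimately show "u \<noteq> v \<and> \<not> blocked u v" ..
next
  assume uv: "u \<noteq> v \<and> \<not> blocked u v"
  have "tau A k x y \<le> lam (lift G s u v) x y"
    if "x \<in> verts G - {s}" "y \<in> verts G - {s}" "x \<noteq> y" for x y
  proof (cases "x \<in> A \<and> y \<in> A")
    case True
    have "2 * k \<le> lam (lift G s u v) x y"
    proof (rule le_lam_if_cuts_avoiding[OF multigraph_lift[OF multigraph u v]])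
      fix Z assume "Z \<subseteq> verts (lift G s u v) - {s}" "(x \<in> Z) \<noteq> (y \<in> Z)"
      then have "separating Z" using True by (auto simp: separating_def)
      then show "2 * k \<le> cut_size (lift G s u v) Z" using cut_size_lift_ge u v uv by blast
    qed (use that in auto)
    then show ?thesis using True by (simp add: tau_def)
  next
    case False
    then show ?thesis by (auto simp: tau_def)
  qed
  then show "admissible G s (tau A k) u v" using u v uv by (simp add: admissible_def)
qed

theorem lifting_graph_structure:
  "complete_multipartite (incident_edges G s) (admissible G s (tau A k))
    \<or> (isolated_plus_balanced_bipartite (incident_edges G s) (admissible G s (tau A k))
       \<and> odd (degree G s))"
  using lifting_graph_cases[OF admissible_iff_not_blocked] by (simp add: degree_def)

end

theorem theorem3p3:
  fixes G :: "('v, 'e) mgraph" and k :: nat and A :: "'v set" and s :: 'v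
  assumes "multigraph G"
    and "k > 0"
    and "A \<subset> verts G"
    and "\<forall>x \<in> A. \<forall>y \<in> A. x \<noteq> y \<longrightarrow> lam G x y \<ge> 2 * k"
    and "\<forall>e \<in> edges G. fst (ends G e) \<in> A \<or> snd (ends G e) \<in> A"
    and "s \<in> verts G" and "s \<notin> A"
    and "degree G s > 3"
  shows "complete_multipartite (incident_edges G s) (admissible G s (tau A k))
      \<or> (isolated_plus_balanced_bipartite (incident_edges G s) (admissible G s (tau A k))
         \<and> odd (degree G s))"
proof -
  interpret graph_lifting G A k s
    using assms(1,3,4,5,7) by unfold_locales auto
  show ?thesis by (rule lifting_graph_structure)
qed

end
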